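(* Let $p$ be an odd prime and $G$ a finite non-abelian $2$-generated $p$-group with cyclic $G'$, with parameters and the fixed basis $(b_1,b_2)$ and $a=[b_2,b_1]$ as in the context. Then: (1) $\mathrm{Z}(G)\cap G'=\langle a^{p^{\max(o_1,o_2)}}\rangle$; (2) $\exp(G)=p^{\max(n_1+o'_1,n_2+o'_2)}$; (3) for $i\ge2$, $\gamma_i(G)=\langle a^{p^{(i-2)(m-\max(o_1,o_2))}}\rangle$, and the nilpotency class of $G$ is $1+\lceil m/(m-\max(o_1,o_2))\rceil$.
   Context: Conventions: $[x,y]=x^{-1}y^{-1}xy$, $x^y=y^{-1}xy$; $\gamma_i$ is the lower central series. Let $|G'|=p^m$, $G/G'\cong C_{p^{n_1}}\times C_{p^{n_2}}$, $n_1\ge n_2\ge1$. A basis is a pair $(b_1,b_2)$ with $G/G'=\langle b_1G'\rangle\times\langle b_2G'\rangle$ and $|b_iG'|=p^{n_i}$; $\mathcal{B}$ is the set of bases. For $g\in G$, $p^{o(g)}=|g{\rm C}_G(G')|$. $(o_1,o_2)=\min_{\mathrm{lex}}\{(o(b_1),o(b_2)):(b_1,b_2)\in\mathcal{B}\}$; $r_1=1+p^{m-o_1}$; $r_2=1+p^{m-o_2}$ if $o_2>o_1$, else $r_2=r_1^{p^{o_1-o_2}}$. $\mathcal{B}_r$ is the set of bases with $x^{b_i}=x^{r_i}$ for all $x\in G'$. For $b\in\mathcal{B}$, $|b_i|=p^{n_i+o'_i(b)}$ defines $o'_i(b)$; $(o'_1,o'_2)=\max_{\mathrm{lex}}\{(o'_1(b),o'_2(b)):b\in\mathcal{B}_r\}$.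 Fix $(b_1,b_2)\in\mathcal{B}_r$ with $(o'_1(b),o'_2(b))=(o'_1,o'_2)$ and put $a=[b_2,b_1]$ (a generator of $G'$, of order $p^m$). *)

theory Defs
  imports "HOL-Algebra.Algebra"
begin

definition commutator :: "('a,'b) monoid_scheme \<Rightarrow> 'a \<Rightarrow> 'a \<Rightarrow> 'a" where
  "commutator G x y = inv\<^bsub>G\<^esub> x \<otimes>\<^bsub>G\<^esub> inv\<^bsub>G\<^esub> y \<otimes>\<^bsub>G\<^esub> x \<otimes>\<^bsub>G\<^esub> y"

definition conj :: "('a,'b) monoid_scheme \<Rightarrow> 'a \<Rightarrow> 'a \<Rightarrow> 'a" where
  "conj G x y = inv\<^bsub>G\<^esub> y \<otimes>\<^bsub>G\<^esub> x \<otimes>\<^bsub>G\<^esub> y"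

abbreviation derived_subgroup :: "('a,'b) monoid_scheme \<Rightarrow> 'a set" where
  "derived_subgroup G \<equiv> derived G (carrier G)"

definition center :: "('a,'b) monoid_scheme \<Rightarrow> 'a set" where
  "center G = {z \<in> carrier G. \<forall>g \<in> carrier G. z \<otimes>\<^bsub>G\<^esub> g = g \<otimes>\<^bsub>G\<^esub> z}"

definition centralizer :: "('a,'b) monoid_scheme \<Rightarrow> 'a set \<Rightarrow> 'a set" where
  "centralizer G H = {g \<in> carrier G. \<forall>h \<in> H. g \<otimes>\<^bsub>G\<^esub> h = h \<otimes>\<^bsub>G\<^esub> g}"

definition comm_subgroup :: "('a,'b) monoid_scheme \<Rightarrow> 'a set \<Rightarrow> 'a set \<Rightarrow> 'a set" where
  "comm_subgroup G H K = generate G {commutator G h k | h k. h \<in> H \<and> k \<in> K}"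

(* lower central series: gamma G 1 = G, gamma G (i+1) = [gamma G i, G];
   (gamma G 0 is also set to G; it is never used) *)
fun gamma_aux :: "('a,'b) monoid_scheme \<Rightarrow> nat \<Rightarrow> 'a set" where
  "gamma_aux G 0 = carrier G"
| "gamma_aux G (Suc n) = comm_subgroup G (gamma_aux G n) (carrier G)"

definition gamma :: "('a,'b) monoid_scheme \<Rightarrow> nat \<Rightarrow> 'a set" where
  "gamma G i = gamma_aux G (i - 1)"

definition nilpotency_class :: "('a,'b) monoid_scheme \<Rightarrow> nat" where
  "nilpotency_class G = (LEAST c. gamma G (Suc c) = {\<one>\<^bsub>G\<^esub>})"

definition group_exponent :: "('a,'b) monoid_scheme \<Rightarrow> nat" where
  "group_exponent G = (LEAST n. 0 < n \<and> (\<forall>g \<in> carrier G. g [^]\<^bsub>G\<^esub> n = \<one>\<^bsub>G\<^esub>))"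

definition is_basis :: "('a,'b) monoid_scheme \<Rightarrow> nat \<Rightarrow> nat \<Rightarrow> nat \<Rightarrow> 'a \<Rightarrow> 'a \<Rightarrow> bool" where
  "is_basis G p n1 n2 b1 b2 \<longleftrightarrow>
     (let D = derived_subgroup G; Q = G Mod D; c1 = D #>\<^bsub>G\<^esub> b1; c2 = D #>\<^bsub>G\<^esub> b2 in
      b1 \<in> carrier G \<and> b2 \<in> carrier G \<and>
      generate Q {c1, c2} = carrier Q \<and>
      generate Q {c1} \<inter> generate Q {c2} = {\<one>\<^bsub>Q\<^esub>} \<and>
      group.ord Q c1 = p ^ n1 \<and> group.ord Q c2 = p ^ n2)"

definition ocen :: "('a,'b) monoid_scheme \<Rightarrow> nat \<Rightarrow> 'a \<Rightarrow> nat" where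
  "ocen G p g = (let C = centralizer G (derived_subgroup G) in
                 THE k. group.ord (G Mod C) (C #>\<^bsub>G\<^esub> g) = p ^ k)"

(* (o1,o2): lexicographic minimum of (o(b1),o(b2)) over bases *)
definition o1 :: "('a,'b) monoid_scheme \<Rightarrow> nat \<Rightarrow> nat \<Rightarrow> nat \<Rightarrow> nat" where
  "o1 G p n1 n2 = Min {ocen G p b1 | b1 b2. is_basis G p n1 n2 b1 b2}"

definition o2 :: "('a,'b) monoid_scheme \<Rightarrow> nat \<Rightarrow> nat \<Rightarrow> nat \<Rightarrow> nat" where
  "o2 G p n1 n2 = Min {ocen G p b2 | b1 b2. is_basis G p n1 n2 b1 b2 \<and> ocen G p b1 = o1 G p n1 n2}"

definition r1 :: "('a,'b) monoid_scheme \<Rightarrow> nat \<Rightarrow> nat \<Rightarrow> nat \<Rightarrow> nat \<Rightarrow> nat" where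
  "r1 G p m n1 n2 = 1 + p ^ (m - o1 G p n1 n2)"

definition r2 :: "('a,'b) monoid_scheme \<Rightarrow> nat \<Rightarrow> nat \<Rightarrow> nat \<Rightarrow> nat \<Rightarrow> nat" where
  "r2 G p m n1 n2 =
     (if o2 G p n1 n2 > o1 G p n1 n2 then 1 + p ^ (m - o2 G p n1 n2)
      else r1 G p m n1 n2 ^ (p ^ (o1 G p n1 n2 - o2 G p n1 n2)))"

definition is_basis_r :: "('a,'b) monoid_scheme \<Rightarrow> nat \<Rightarrow> nat \<Rightarrow> nat \<Rightarrow> nat \<Rightarrow> 'a \<Rightarrow> 'a \<Rightarrow> bool" where
  "is_basis_r G p m n1 n2 b1 b2 \<longleftrightarrow>
     is_basis G p n1 n2 b1 b2 \<and>
     (\<forall>x \<in> derived_subgroup G.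
        conj G x b1 = x [^]\<^bsub>G\<^esub> r1 G p m n1 n2 \<and>
        conj G x b2 = x [^]\<^bsub>G\<^esub> r2 G p m n1 n2)"

definition oprime :: "('a,'b) monoid_scheme \<Rightarrow> nat \<Rightarrow> nat \<Rightarrow> 'a \<Rightarrow> nat" where
  "oprime G p n b = (THE k. group.ord G b = p ^ (n + k))"

(* (o'1,o'2): lexicographic maximum over B_r *)
definition o1' :: "('a,'b) monoid_scheme \<Rightarrow> nat \<Rightarrow> nat \<Rightarrow> nat \<Rightarrow> nat \<Rightarrow> nat" where
  "o1' G p m n1 n2 = Max {oprime G p n1 b1 | b1 b2. is_basis_r G p m n1 n2 b1 b2}"

definition o2' :: "('a,'b) monoid_scheme \<Rightarrow> nat \<Rightarrow> nat \<Rightarrow> nat \<Rightarrow> nat \<Rightarrow> nat" where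
  "o2' G p m n1 n2 = Max {oprime G p n2 b2 | b1 b2. is_basis_r G p m n1 n2 b1 b2
                              \<and> oprime G p n1 b1 = o1' G p m n1 n2}"

end

theory Submission
  imports Defs "HOL-Number_Theory.Residues"
begin

text \<open>
  Every element of G acts on the cyclic group G' by a power map u -> u^t, and t = 1 (mod p)
  because G is a p-group. The elements acting with t = 1 (mod p^(m-M)) form a subgroup containing
  b1, b2 and G', hence all of G, while one of b1, b2 acts by exactly u -> u^(1 + p^(m-M)). So for
  u in G' every commutator [u, g] is a power of u^(p^(m-M)), and u^(p^(m-M)) itself occurs. This
  identifies the central elements of G' as those killed by p^(m-M) and gives
  [<u>, G] = <u^(p^(m-M))>, hence the lower central series and the class, once we know that
  a = [b2, b1] generates G'. The latter is a Frattini argument: otherwise all commutators of the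
  generators lie in the normal subgroup of p-th powers of G', which would then contain G'.
  For the exponent, p odd gives (xy)^(p^K) = x^(p^K) y^(p^K) u^(p^K) with u in G', so the elements
  killed by the larger of the orders of b1, b2 form a subgroup; it contains G' because
  [b2^(p^K), b1] = a^(p^K w) with w prime to p.
\<close>

section \<open>Congruences and geometric sums\<close>

lemma pow_prime_cong:
  fixes s p :: nat
  assumes p: "Factorial_Ring.prime p"
  shows "[s ^ p = s] (mod p)"
proof (cases "p dvd s")
  case True
  then have "p dvd s ^ p"
    using dvd_trans[OF True dvd_power[of p s]] prime_gt_0_nat[OF p] by blast
  then show ?thesis
    using True by (simp add: cong_def)
next
  case False
  then have "[s ^ (p - 1) * s = 1 * s] (mod p)"
    using fermat_theorem[OF p] cong_scalar_right by blast
  then show ?thesis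
    using prime_gt_0_nat[OF p] by (simp flip: power_Suc2)
qed

lemma pow_prime_power_cong:
  fixes t p :: nat
  assumes p: "Factorial_Ring.prime p"
  shows "[t ^ (p ^ k) = t] (mod p)"
proof (induction k)
  case 0
  then show ?case by simp
next
  case (Suc k)
  have "t ^ (p ^ Suc k) = (t ^ (p ^ k)) ^ p"
    by (simp only: power_Suc2 power_mult)
  then have "[t ^ (p ^ Suc k) = t ^ (p ^ k)] (mod p)"
    using pow_prime_cong[OF p] by simp
  then show ?case
    using Suc.IH by (rule cong_trans)
qed

definition geom_sum :: "nat \<Rightarrow> nat \<Rightarrow> nat" where
  "geom_sum n t = (\<Sum>k<n. t ^ k)"

lemma geom_sum_0 [simp]: "geom_sum 0 t = 0"
  by (simp add: geom_sum_def)

lemma geom_sum_Suc: "geom_sum (Suc n) t = geom_sum n t + t ^ n"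
  by (simp add: geom_sum_def)

lemma geom_sum_Suc_left: "geom_sum (Suc n) t = 1 + t * geom_sum n t"
  unfolding geom_sum_def sum.lessThan_Suc_shift by (simp add: sum_distrib_left)

lemma geom_sum_add: "geom_sum (n + k) t = geom_sum n t + t ^ n * geom_sum k t"
  by (induction k) (simp_all add: geom_sum_Suc algebra_simps power_add)

lemma geom_sum_mult: "geom_sum (n * k) t = geom_sum n t * geom_sum k (t ^ n)"
proof (induction k)
  case 0
  then show ?case by simp
next
  case (Suc k)
  have "geom_sum (n * Suc k) t = geom_sum n t + t ^ n * geom_sum (n * k) t"
    by (simp add: geom_sum_add)
  then show ?case
    using Suc.IH by (simp add: geom_sum_Suc_left algebra_simps)
qed

lemma geom_sum_cong:
  assumes "[t = 1] (mod q)"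
  shows "[geom_sum n t = n] (mod q)"
proof -
  have "[geom_sum n t = (\<Sum>k<n. 1 ^ k)] (mod q)"
    unfolding geom_sum_def using assms by (intro cong_sum cong_pow)
  then show ?thesis
    by simp
qed

text \<open>The recursion E(n+1) = (geom_sum n S + E(n) R) S describes the exponent of [y, x] in (xy)^n
  when x and y act on [y, x] by the powers R and S; it keeps 2 E(n) = n (n - 1).\<close>

lemma binomial_exponent_step_cong:
  assumes R: "[R = 1] (mod q)" and S: "[S = 1] (mod q)" and E: "[2 * E = n * (n - 1)] (mod q)"
  shows "[2 * ((geom_sum n S + E * R) * S) = Suc n * (Suc n - 1)] (mod q)"
proof -
  have "[(geom_sum n S + E * R) * S = (n + E * 1) * 1] (mod q)"
    using R S by (intro cong_mult cong_add geom_sum_cong cong_refl)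
  then have "[(geom_sum n S + E * R) * S = n + E] (mod q)"
    by simp
  then have "[2 * ((geom_sum n S + E * R) * S) = 2 * (n + E)] (mod q)"
    by (rule cong_scalar_left)
  also have "2 * (n + E) = 2 * n + 2 * E"
    by simp
  also have "[2 * n + 2 * E = 2 * n + n * (n - 1)] (mod q)"
    using E by (rule cong_add_lcancel_nat[THEN iffD2])
  also have "2 * n + n * (n - 1) = Suc n * (Suc n - 1)"
    by (cases n) (simp_all add: algebra_simps)
  finally show ?thesis .
qed

lemma geom_sum_prime_cong:
  fixes p t :: nat
  assumes p: "Factorial_Ring.prime p" "odd p" and t: "[t = 1] (mod p)"
  shows "[geom_sum p t = p] (mod p\<^sup>2)"
proof -
  have "1 < p"
    using prime_gt_1_nat[OF p(1)] .
  then have "t mod p = 1"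
    using t by (simp add: cong_def)
  then obtain s where s: "t = 1 + p * s"
    using mult_div_mod_eq[of p t] by (metis add.commute)
  have powers: "[t ^ k = 1 + k * (p * s)] (mod p\<^sup>2)" for k
  proof (induction k)
    case 0
    then show ?case by simp
  next
    case (Suc k)
    have "[t ^ Suc k = (1 + k * (p * s)) * t] (mod p\<^sup>2)"
      using Suc.IH by (metis cong_scalar_right power_Suc2)
    also have "(1 + k * (p * s)) * t = 1 + Suc k * (p * s) + (k * s * s) * p\<^sup>2"
      by (simp add: s algebra_simps power2_eq_square)
    also have "[\<dots> = 1 + Suc k * (p * s)] (mod p\<^sup>2)"
      by (simp add: cong_def)
    finally show ?case .
  qed
  obtain r where r: "p = Suc (2 * r)"
    using p(2) oddE by fastforce
  have "(\<Sum>k<p. k) = p * r"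
    using gauss_sum_nat[of "2 * r"] by (simp add: r lessThan_Suc_atMost atLeast0AtMost)
  have "[geom_sum p t = (\<Sum>k<p. 1 + k * (p * s))] (mod p\<^sup>2)"
    unfolding geom_sum_def using powers by (rule cong_sum)
  also have "(\<Sum>k<p. 1 + k * (p * s)) = p + (\<Sum>k<p. k) * (p * s)"
    by (simp only: sum.distrib sum_distrib_right) simp
  also have "\<dots> = p + (r * s) * p\<^sup>2"
    using \<open>(\<Sum>k<p. k) = p * r\<close> by (simp add: power2_eq_square algebra_simps)
  also have "[\<dots> = p] (mod p\<^sup>2)"
    by (simp add: cong_def)
  finally show ?thesis .
qed

lemma geom_sum_prime_power:
  fixes p t :: nat
  assumes p: "Factorial_Ring.prime p" "odd p" and t: "[t = 1] (mod p)"
  shows "\<exists>w. geom_sum (p ^ K) t = p ^ K * w \<and> \<not> p dvd w"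
proof (induction K)
  case 0
  then show ?case
    using p(1) by (auto simp: geom_sum_def intro!: exI[of _ 1])
next
  case (Suc K)
  then obtain w where w: "geom_sum (p ^ K) t = p ^ K * w" "\<not> p dvd w"
    by blast
  have "[t ^ (p ^ K) = 1] (mod p)"
    using t cong_pow by fastforce
  then have "[geom_sum p (t ^ (p ^ K)) = p] (mod p\<^sup>2)"
    using geom_sum_prime_cong[OF p] by blast
  moreover have "p < p\<^sup>2"
    using prime_gt_1_nat[OF p(1)] by (simp add: power2_eq_square)
  ultimately have "geom_sum p (t ^ (p ^ K)) mod p\<^sup>2 = p"
    by (simp add: cong_def)
  then obtain c where "geom_sum p (t ^ (p ^ K)) = p\<^sup>2 * c + p"
    by (metis div_mult_mod_eq mult.commute)
  then have c: "geom_sum p (t ^ (p ^ K)) = p * (p * c + 1)"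
    by (simp add: power2_eq_square algebra_simps)
  have "\<not> p dvd p * c + 1"
    using dvd_add_right_iff[of p "p * c" 1] prime_gt_1_nat[OF p(1)] by simp
  then have "\<not> p dvd w * (p * c + 1)"
    using w(2) prime_dvd_mult_iff[OF p(1)] by blast
  moreover have "geom_sum (p ^ Suc K) t = geom_sum (p ^ K) t * geom_sum p (t ^ (p ^ K))"
    using geom_sum_mult[of "p ^ K" p t] by (simp only: power_Suc2)
  then have "geom_sum (p ^ Suc K) t = p ^ Suc K * (w * (p * c + 1))"
    unfolding w(1) c by (simp only: power_Suc2 ac_simps)
  ultimately show ?case
    by blast
qed

lemma Least_ge_eq_ceiling:
  fixes m d :: nat
  assumes "0 < d"
  shows "(LEAST c. 1 \<le> c \<and> m \<le> (c - 1) * d) = 1 + nat \<lceil>real m / real d\<rceil>"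
proof -
  define q where "q = nat \<lceil>real m / real d\<rceil>"
  have d: "0 < real d"
    using assms by simp
  have "(LEAST c. 1 \<le> c \<and> m \<le> (c - 1) * d) = 1 + q"
  proof (rule Least_equality)
    have "real m / real d \<le> real q"
      unfolding q_def by (simp add: le_of_int_ceiling)
    then have "real m \<le> real q * real d"
      using pos_divide_le_eq[OF d] by blast
    then show "1 \<le> 1 + q \<and> m \<le> (1 + q - 1) * d"
      by (simp flip: of_nat_mult)
  next
    fix c assume c: "1 \<le> c \<and> m \<le> (c - 1) * d"
    then have "real m \<le> real (c - 1) * real d"
      by (metis of_nat_le_iff of_nat_mult)
    then have "real m / real d \<le> real (c - 1)"
      using pos_divide_le_eq[OF d] by blast
    then have "q \<le> c - 1"
      unfolding q_def by (simp add: nat_le_iff ceiling_le_iff)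
    then show "1 + q \<le> c"
      using c by linarith
  qed
  then show ?thesis
    by (simp add: q_def)
qed

section \<open>Conjugation and commutators\<close>

context group
begin

lemma inv_mult_cancel_left [simp]: "x \<in> carrier G \<Longrightarrow> y \<in> carrier G \<Longrightarrow> inv x \<otimes> (x \<otimes> y) = y"
  by (simp flip: m_assoc)

lemma mult_inv_cancel_left [simp]: "x \<in> carrier G \<Longrightarrow> y \<in> carrier G \<Longrightarrow> x \<otimes> (inv x \<otimes> y) = y"
  by (simp flip: m_assoc)

lemma conj_closed [intro, simp]: "x \<in> carrier G \<Longrightarrow> g \<in> carrier G \<Longrightarrow> conj G x g \<in> carrier G"
  by (simp add: conj_def)

lemma commutator_closed [intro, simp]:
  "x \<in> carrier G \<Longrightarrow> y \<in> carrier G \<Longrightarrow> commutator G x y \<in> carrier G"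
  by (simp add: commutator_def)

lemma conj_one_right [simp]: "x \<in> carrier G \<Longrightarrow> conj G x \<one> = x"
  by (simp add: conj_def)

lemma conj_conj:
  "\<lbrakk>x \<in> carrier G; g \<in> carrier G; h \<in> carrier G\<rbrakk> \<Longrightarrow> conj G (conj G x g) h = conj G x (g \<otimes> h)"
  by (simp add: conj_def inv_mult_group m_assoc)

lemma conj_mult:
  "\<lbrakk>x \<in> carrier G; y \<in> carrier G; g \<in> carrier G\<rbrakk> \<Longrightarrow> conj G (x \<otimes> y) g = conj G x g \<otimes> conj G y g"
  by (simp add: conj_def m_assoc)

lemma conj_pow: "x \<in> carrier G \<Longrightarrow> g \<in> carrier G \<Longrightarrow> conj G (x [^] (n::nat)) g = conj G x g [^] n"
  by (induction n) (simp_all add: conj_mult, simp add: conj_def)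

lemma mult_conj: "x \<in> carrier G \<Longrightarrow> g \<in> carrier G \<Longrightarrow> g \<otimes> conj G x g = x \<otimes> g"
  by (simp add: conj_def flip: m_assoc)

lemma commutator_eq_inv_mult_conj:
  "x \<in> carrier G \<Longrightarrow> y \<in> carrier G \<Longrightarrow> commutator G x y = inv x \<otimes> conj G x y"
  by (simp add: commutator_def conj_def m_assoc)

lemma mult_commutator:
  "x \<in> carrier G \<Longrightarrow> y \<in> carrier G \<Longrightarrow> x \<otimes> y = y \<otimes> x \<otimes> commutator G x y"
  by (simp add: commutator_def m_assoc)

lemma inv_commutator:
  "x \<in> carrier G \<Longrightarrow> y \<in> carrier G \<Longrightarrow> inv (commutator G x y) = commutator G y x"
  by (simp add: commutator_def inv_mult_group m_assoc)

lemma commutator_one_right [simp]: "x \<in> carrier G \<Longrightarrow> commutator G x \<one> = \<one>"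
  by (simp add: commutator_def)

lemma commutator_one_left [simp]: "x \<in> carrier G \<Longrightarrow> commutator G \<one> x = \<one>"
  by (simp add: commutator_def)

lemma commutator_self [simp]: "x \<in> carrier G \<Longrightarrow> commutator G x x = \<one>"
  by (simp add: commutator_def m_assoc)

lemma commutator_eq_one_iff:
  assumes "x \<in> carrier G" "y \<in> carrier G"
  shows "commutator G x y = \<one> \<longleftrightarrow> x \<otimes> y = y \<otimes> x"
  using mult_commutator[OF assms] assms
  by (metis commutator_closed m_closed r_one l_cancel_one')

lemma commutator_mult_right:
  "\<lbrakk>x \<in> carrier G; y \<in> carrier G; z \<in> carrier G\<rbrakk> \<Longrightarrow>
   commutator G x (y \<otimes> z) = commutator G x z \<otimes> conj G (commutator G x y) z"
  by (simp add: commutator_def conj_def inv_mult_group m_assoc)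

lemma commutator_mult_left:
  "\<lbrakk>x \<in> carrier G; x' \<in> carrier G; y \<in> carrier G\<rbrakk> \<Longrightarrow>
   commutator G (x \<otimes> x') y = conj G (commutator G x y) x' \<otimes> commutator G x' y"
  by (simp add: commutator_def conj_def inv_mult_group m_assoc)

lemma commutators_eq_derived_set:
  "{commutator G x y | x y. x \<in> carrier G \<and> y \<in> carrier G} = derived_set G (carrier G)"
proof (intro equalityI subsetI)
  fix h assume "h \<in> {commutator G x y | x y. x \<in> carrier G \<and> y \<in> carrier G}"
  then obtain x y where "x \<in> carrier G" "y \<in> carrier G" "h = commutator G x y"
    by blast
  then have "h = inv x \<otimes> inv y \<otimes> inv (inv x) \<otimes> inv (inv y)" "inv x \<in> carrier G" "inv y \<in> carrier G"
    by (simp_all add: commutator_def)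
  then show "h \<in> derived_set G (carrier G)"
    by blast
next
  fix h assume "h \<in> derived_set G (carrier G)"
  then obtain x y where "x \<in> carrier G" "y \<in> carrier G" "h = x \<otimes> y \<otimes> inv x \<otimes> inv y"
    by blast
  then have "h = commutator G (inv x) (inv y)" "inv x \<in> carrier G" "inv y \<in> carrier G"
    by (simp_all add: commutator_def)
  then show "h \<in> {commutator G x y | x y. x \<in> carrier G \<and> y \<in> carrier G}"
    by blast
qed

lemma commutator_in_derived:
  "x \<in> carrier G \<Longrightarrow> y \<in> carrier G \<Longrightarrow> commutator G x y \<in> derived G (carrier G)"
  unfolding derived_def commutators_eq_derived_set[symmetric] by (rule generate.incl) blast

lemma comm_subgroup_carrier: "comm_subgroup G (carrier G) (carrier G) = derived G (carrier G)"
  unfolding comm_subgroup_def derived_def commutators_eq_derived_set ..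

lemma nat_pow_eq_iff_cong:
  "x \<in> carrier G \<Longrightarrow> x [^] (i::nat) = x [^] (j::nat) \<longleftrightarrow> [i = j] (mod ord x)"
  using int_pow_eq[of x "int i" "int j"]
  by (simp add: int_pow_int cong_iff_dvd_diff dvd_diff_commute flip: cong_int_iff)

lemma finite_subgroupI:
  assumes "finite (carrier G)" "S \<subseteq> carrier G" "\<one> \<in> S"
    and mult: "\<And>x y. x \<in> S \<Longrightarrow> y \<in> S \<Longrightarrow> x \<otimes> y \<in> S"
  shows "subgroup S G"
proof (rule subgroupI)
  fix x assume x: "x \<in> S"
  have pow: "x [^] (n::nat) \<in> S" for n
    by (induction n) (simp_all add: assms(3) mult x)
  have "inv x = x [^] (ord x - 1)"
    using x assms(2) ord_ge_1[OF assms(1)] pow_ord_eq_1[of x]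
    by (metis subsetD inv_equality nat_pow_Suc nat_pow_closed Suc_diff_1 less_le_trans zero_less_one)
  then show "inv x \<in> S"
    using pow by simp
qed (use assms in auto)

lemma group_exponent_eqI:
  fixes N :: nat
  assumes "0 < N" "\<forall>g\<in>carrier G. g [^] N = \<one>" "x \<in> carrier G" "ord x = N"
  shows "group_exponent G = N"
  unfolding group_exponent_def
proof (rule Least_equality)
  fix n :: nat assume "0 < n \<and> (\<forall>g\<in>carrier G. g [^] n = \<one>)"
  then show "N \<le> n"
    using assms(3,4) pow_eq_id by (auto intro: dvd_imp_le)
qed (use assms in auto)

lemma generate_pow_prime_power:
  fixes p :: nat
  assumes "finite (carrier G)" "1 < p" "x \<in> carrier G" "ord x = p ^ m" "M \<le> m"
  shows "{z \<in> generate G {x}. z [^] (p ^ (m - M)) = \<one>} = generate G {x [^] (p ^ M)}"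
proof -
  have "x [^] (k * p ^ (m - M)) = \<one> \<longleftrightarrow> p ^ M dvd k" for k
  proof -
    have "p ^ m = p ^ M * p ^ (m - M)"
      using assms(5) by (simp flip: power_add)
    then show ?thesis
      using assms(2-4) pow_eq_id by simp
  qed
  then show ?thesis
    using assms(3) generate_pow_on_finite_carrier[OF assms(1)]
    by (auto simp: nat_pow_pow dvd_def mult.commute mult.left_commute)
qed

lemma conj_pow_eq_pow:
  "\<lbrakk>u \<in> carrier G; g \<in> carrier G; conj G u g = u [^] (t::nat)\<rbrakk> \<Longrightarrow> conj G (u [^] (k::nat)) g = (u [^] k) [^] t"
  by (simp add: conj_pow nat_pow_pow mult.commute)

lemma pow_mult_eq_pow_geom_sum:
  assumes g: "g \<in> carrier G" and u: "u \<in> carrier G" and conj_u: "conj G u g = u [^] t"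
  shows "(g \<otimes> u) [^] n = g [^] n \<otimes> u [^] geom_sum n t"
proof (induction n)
  case 0
  then show ?case by simp
next
  case (Suc n)
  let ?s = "geom_sum n t"
  have "u [^] ?s \<otimes> g = g \<otimes> u [^] (?s * t)"
    using mult_conj[of "u [^] ?s" g] conj_pow_eq_pow[OF u g conj_u] g u by (simp add: nat_pow_pow)
  moreover have "(g \<otimes> u) [^] Suc n = g [^] n \<otimes> (u [^] ?s \<otimes> g) \<otimes> u"
    using Suc g u by (simp add: m_assoc)
  ultimately have "(g \<otimes> u) [^] Suc n = g [^] n \<otimes> (g \<otimes> u [^] (?s * t)) \<otimes> u"
    by simp
  also have "\<dots> = g [^] Suc n \<otimes> u [^] Suc (?s * t)"
    using g u by (simp add: m_assoc)
  finally show ?case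
    by (simp add: geom_sum_Suc_left mult.commute)
qed

lemma commutator_pow_left:
  assumes x: "x \<in> carrier G" and y: "y \<in> carrier G"
    and S: "conj G (commutator G y x) y = commutator G y x [^] S"
  shows "commutator G (y [^] n) x = commutator G y x [^] geom_sum n S"
proof -
  have "conj G y x = y \<otimes> commutator G y x"
    using commutator_eq_inv_mult_conj[OF y x] x y by simp
  then have "conj G (y [^] n) x = y [^] n \<otimes> commutator G y x [^] geom_sum n S"
    using conj_pow[OF y x] pow_mult_eq_pow_geom_sum[OF y _ S] x y by simp
  then show ?thesis
    using commutator_eq_inv_mult_conj[of "y [^] n" x] x y by simp
qed

lemma pow_mult_eq_commutator_pow:
  fixes R S q :: nat
  assumes x: "x \<in> carrier G" and y: "y \<in> carrier G"
    and R: "conj G (commutator G y x) x = commutator G y x [^] R" "[R = 1] (mod q)"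
    and S: "conj G (commutator G y x) y = commutator G y x [^] S" "[S = 1] (mod q)"
  shows "\<exists>E. [2 * E = n * (n - 1)] (mod q) \<and>
    (x \<otimes> y) [^] n = x [^] n \<otimes> y [^] n \<otimes> commutator G y x [^] E"
proof (induction n)
  case 0
  show ?case
    by (intro exI[of _ 0]) simp
next
  case (Suc n)
  define d where "d = commutator G y x"
  have d: "d \<in> carrier G"
    using x y by (simp add: d_def)
  obtain E where E: "[2 * E = n * (n - 1)] (mod q)"
    and IH: "(x \<otimes> y) [^] n = x [^] n \<otimes> y [^] n \<otimes> d [^] E"
    using Suc d_def by blast
  define E' where "E' = (geom_sum n S + E * R) * S"
  have dx: "d [^] E \<otimes> x = x \<otimes> d [^] (E * R)"
    using mult_conj[of "d [^] E" x] conj_pow_eq_pow[OF d x R(1)[folded d_def]] d x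
    by (simp add: nat_pow_pow)
  have yx: "y [^] n \<otimes> x = x \<otimes> y [^] n \<otimes> d [^] geom_sum n S"
    using mult_commutator[of "y [^] n" x] commutator_pow_left[OF x y S(1)] x y
    by (simp add: d_def)
  have dy: "d [^] k \<otimes> y = y \<otimes> d [^] (k * S)" for k
    using mult_conj[of "d [^] k" y] conj_pow_eq_pow[OF d y S(1)[folded d_def]] d y
    by (simp add: nat_pow_pow)
  have "(x \<otimes> y) [^] Suc n = x [^] n \<otimes> (y [^] n \<otimes> (d [^] E \<otimes> x)) \<otimes> y"
    using IH x y d by (simp add: m_assoc)
  also have "\<dots> = x [^] n \<otimes> (y [^] n \<otimes> x) \<otimes> (d [^] (E * R) \<otimes> y)"
    using x y d by (simp add: dx m_assoc)
  also have "\<dots> = x [^] n \<otimes> (x \<otimes> y [^] n \<otimes> d [^] geom_sum n S) \<otimes> (d [^] (E * R) \<otimes> y)"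
    by (simp only: yx)
  also have "\<dots> = x [^] n \<otimes> x \<otimes> y [^] n \<otimes> (d [^] (geom_sum n S + E * R) \<otimes> y)"
    using x y d by (simp add: m_assoc flip: nat_pow_mult)
  also have "\<dots> = x [^] Suc n \<otimes> y [^] Suc n \<otimes> d [^] E'"
    using x y d by (simp add: dy m_assoc E'_def)
  finally have "(x \<otimes> y) [^] Suc n = x [^] Suc n \<otimes> y [^] Suc n \<otimes> d [^] E'" .
  moreover have "[2 * E' = Suc n * (Suc n - 1)] (mod q)"
    unfolding E'_def using R(2) S(2) E by (rule binomial_exponent_step_cong)
  ultimately show ?case
    using d_def by blast
qed

lemma pow_prime_mult_eq_commutator_pow:
  fixes R S p :: nat
  assumes p: "Factorial_Ring.prime p" "odd p"
    and x: "x \<in> carrier G" and y: "y \<in> carrier G"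
    and R: "conj G (commutator G y x) x = commutator G y x [^] R" "[R = 1] (mod p)"
    and S: "conj G (commutator G y x) y = commutator G y x [^] S" "[S = 1] (mod p)"
  shows "\<exists>E. (x \<otimes> y) [^] p = x [^] p \<otimes> y [^] p \<otimes> commutator G y x [^] (p * E)"
proof -
  obtain E where E: "[2 * E = p * (p - 1)] (mod p)"
    and power: "(x \<otimes> y) [^] p = x [^] p \<otimes> y [^] p \<otimes> commutator G y x [^] E"
    using pow_mult_eq_commutator_pow[OF x y R S] by blast
  have "[p * (p - 1) = 0] (mod p)"
    by (simp add: cong_0_iff)
  with E have "p dvd 2 * E"
    by (metis cong_trans cong_0_iff)
  moreover have "\<not> p dvd 2"
    using p primes_dvd_imp_eq[OF p(1) two_is_prime_nat] by auto
  ultimately have "p dvd E"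
    using prime_dvd_mult_iff[OF p(1)] by blast
  then show ?thesis
    using power by blast
qed

end

lemma (in normal) subgroup_eq_carrier_if_quotient_generated:
  assumes gen: "generate (G Mod H) ((\<lambda>b. H #> b) ` B) = carrier (G Mod H)"
    and T: "subgroup T G" "B \<subseteq> T" "H \<subseteq> T"
  shows "T = carrier G"
proof
  show "T \<subseteq> carrier G"
    using T(1) subgroup.subset by blast
next
  have hom: "group_hom G (G Mod H) (\<lambda>x. H #> x)"
    using factorgroup_is_group r_coset_hom_Mod by (simp add: group_hom_def group_hom_axioms_def is_group)
  have "generate (G Mod H) ((\<lambda>b. H #> b) ` B) \<subseteq> (\<lambda>x. H #> x) ` T"
    using T by (intro group.generate_subgroup_incl[OF factorgroup_is_group]
        group_hom.subgroup_img_is_subgroup[OF hom]) auto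
  then have image: "carrier (G Mod H) \<subseteq> (\<lambda>x. H #> x) ` T"
    using gen by simp
  show "carrier G \<subseteq> T"
  proof
    fix x assume x: "x \<in> carrier G"
    then obtain t where t: "t \<in> T" "H #> x = H #> t"
      using image by (auto simp: carrier_FactGroup)
    then have "x \<in> H #> t"
      using rcos_self[OF x is_subgroup] by simp
    then obtain h where "h \<in> H" "x = h \<otimes> t"
      unfolding r_coset_def by blast
    then show "x \<in> T"
      using subgroup.m_closed[OF T(1), of h t] T(3) t(1) by blast
  qed
qed

lemma (in normal) commutators_in_normal_if_quotient_generated:
  assumes fin: "finite (carrier G)"
    and gen: "generate (G Mod H) ((\<lambda>b. H #> b) ` B) = carrier (G Mod H)" and B: "B \<subseteq> carrier G"
    and K: "K \<lhd> G" and x: "x \<in> carrier G"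
    and xH: "\<And>u. u \<in> H \<Longrightarrow> commutator G x u \<in> K"
    and xB: "\<And>b. b \<in> B \<Longrightarrow> commutator G x b \<in> K"
  shows "\<forall>y\<in>carrier G. commutator G x y \<in> K"
proof -
  interpret K: normal K G
    using K .
  have "subgroup {y \<in> carrier G. commutator G x y \<in> K} G"
  proof (rule finite_subgroupI[OF fin])
    fix y z assume "y \<in> {y \<in> carrier G. commutator G x y \<in> K}" "z \<in> {y \<in> carrier G. commutator G x y \<in> K}"
    then show "y \<otimes> z \<in> {y \<in> carrier G. commutator G x y \<in> K}"
      using commutator_mult_right[OF x] K.inv_op_closed1 K.m_closed by (auto simp: conj_def)
  qed (use x K.one_closed in auto)
  then have "{y \<in> carrier G. commutator G x y \<in> K} = carrier G"
    using B xB xH subset by (intro subgroup_eq_carrier_if_quotient_generated[OF gen]) auto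
  then show ?thesis
    by blast
qed

lemma (in normal) derived_subset_if_quotient_generated:
  assumes fin: "finite (carrier G)"
    and gen: "generate (G Mod H) ((\<lambda>b. H #> b) ` B) = carrier (G Mod H)" and B: "B \<subseteq> carrier G"
    and K: "K \<lhd> G"
    and HK: "\<And>u g. u \<in> H \<Longrightarrow> g \<in> carrier G \<Longrightarrow> commutator G u g \<in> K"
    and BK: "\<And>b b'. b \<in> B \<Longrightarrow> b' \<in> B \<Longrightarrow> commutator G b b' \<in> K"
  shows "derived G (carrier G) \<subseteq> K"
proof -
  interpret K: normal K G
    using K .
  have HK': "commutator G g u \<in> K" if "u \<in> H" "g \<in> carrier G" for u g
  proof -
    have "inv (commutator G u g) \<in> K"
      using K.m_inv_closed HK that by blast
    then show ?thesis
      using inv_commutator[of u g] that subset by auto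
  qed
  have "subgroup {x \<in> carrier G. \<forall>y\<in>carrier G. commutator G x y \<in> K} G"
  proof (rule finite_subgroupI[OF fin])
    fix x x' assume "x \<in> {x \<in> carrier G. \<forall>y\<in>carrier G. commutator G x y \<in> K}"
      "x' \<in> {x \<in> carrier G. \<forall>y\<in>carrier G. commutator G x y \<in> K}"
    then show "x \<otimes> x' \<in> {x \<in> carrier G. \<forall>y\<in>carrier G. commutator G x y \<in> K}"
      using commutator_mult_left K.inv_op_closed1 K.m_closed by (auto simp: conj_def)
  qed (use K.one_closed in auto)
  moreover have "\<forall>y\<in>carrier G. commutator G b y \<in> K" if "b \<in> B" for b
    using that B HK' BK
    by (intro commutators_in_normal_if_quotient_generated[OF fin gen B K]) auto
  ultimately have "{x \<in> carrier G. \<forall>y\<in>carrier G. commutator G x y \<in> K} = carrier G"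
    using B HK subset by (intro subgroup_eq_carrier_if_quotient_generated[OF gen]) auto
  then have "derived_set G (carrier G) \<subseteq> K"
    unfolding commutators_eq_derived_set[symmetric] by blast
  then show ?thesis
    unfolding derived_def by (rule generate_subgroup_incl[OF _ K.is_subgroup])
qed

definition acts_by_power :: "('a, 'b) monoid_scheme \<Rightarrow> 'a set \<Rightarrow> 'a \<Rightarrow> nat \<Rightarrow> bool" where
  "acts_by_power G H g t \<longleftrightarrow> (\<forall>u\<in>H. conj G u g = u [^]\<^bsub>G\<^esub> t)"

context group
begin

lemma acts_by_power_one: "H \<subseteq> carrier G \<Longrightarrow> acts_by_power G H \<one> 1"
  unfolding acts_by_power_def by auto

lemma acts_by_power_mult:
  assumes "H \<subseteq> carrier G" "g \<in> carrier G" "h \<in> carrier G"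
    and "acts_by_power G H g t" "acts_by_power G H h s"
  shows "acts_by_power G H (g \<otimes> h) (t * s)"
  using assms unfolding acts_by_power_def
  by (auto simp: conj_conj[symmetric] conj_pow nat_pow_pow mult.commute subset_iff)

lemma acts_by_power_pow:
  assumes "H \<subseteq> carrier G" "g \<in> carrier G" "acts_by_power G H g t"
  shows "acts_by_power G H (g [^] (j::nat)) (t ^ j)"
proof (induction j)
  case 0
  then show ?case
    using acts_by_power_one[OF assms(1)] by simp
next
  case (Suc j)
  then show ?case
    using acts_by_power_mult[OF assms(1) _ assms(2) Suc assms(3)] assms(2) by (simp add: mult.commute)
qed

lemma commutator_eq_pow_if_acts_by_power:
  assumes "u \<in> H" "H \<subseteq> carrier G" "g \<in> carrier G" "acts_by_power G H g (1 + w)"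
  shows "commutator G u g = u [^] w"
proof -
  have u: "u \<in> carrier G"
    using assms(1,2) by blast
  have "commutator G u g = inv u \<otimes> conj G u g"
    by (rule commutator_eq_inv_mult_conj[OF u assms(3)])
  also have "conj G u g = u [^] (1 + w)"
    using assms(1,4) unfolding acts_by_power_def by blast
  also have "u [^] (1 + w) = u \<otimes> u [^] w"
    using nat_pow_mult[OF u, of 1 w] u by simp
  also have "inv u \<otimes> (u \<otimes> u [^] w) = u [^] w"
    using u by simp
  finally show ?thesis .
qed

end

section \<open>Finite p-groups with cyclic derived subgroup\<close>

locale cyclic_derived_pgroup = group G for G :: "('a, 'b) monoid_scheme" (structure) +
  fixes p m :: nat
  assumes finite_carrier: "finite (carrier G)"
    and prime: "Factorial_Ring.prime p" and odd: "odd p"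
    and order_eq: "\<exists>k. order G = p ^ k"
    and nonabelian: "\<exists>x\<in>carrier G. \<exists>y\<in>carrier G. x \<otimes> y \<noteq> y \<otimes> x"
    and cyclic_derived: "\<exists>g\<in>derived_subgroup G. generate G {g} = derived_subgroup G"
    and card_derived: "card (derived_subgroup G) = p ^ m"
begin

abbreviation G' :: "'a set" where "G' \<equiv> derived_subgroup G"

lemma subgroup_derived: "subgroup G' G"
  by (simp add: derived_is_subgroup)

lemma derived_subset: "G' \<subseteq> carrier G"
  using subgroup.subset[OF subgroup_derived] .

lemma derived_generator:
  obtains g where "g \<in> G'" "G' = {g [^] k | k. k \<in> (UNIV :: nat set)}" "ord g = p ^ m"
proof -
  obtain g where g: "g \<in> G'" "generate G {g} = G'"
    using cyclic_derived by blast
  then have g_carrier: "g \<in> carrier G"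
    using derived_subset by blast
  have "G' = {g [^] k | k. k \<in> (UNIV :: nat set)}"
    using generate_pow_on_finite_carrier[OF finite_carrier g_carrier] g(2) by simp
  moreover have "ord g = p ^ m"
    using generate_pow_card[OF g_carrier] g(2) card_derived by simp
  ultimately show thesis
    using that g(1) by blast
qed

lemma derived_pow_closed:
  assumes "u \<in> G'"
  shows "u [^] (k::nat) \<in> G'"
proof (rule derived_generator)
  fix g assume g: "g \<in> G'" "G' = {g [^] k | k. k \<in> (UNIV :: nat set)}"
  then obtain j where "u = g [^] (j::nat)"
    using assms by blast
  then have "u [^] k = g [^] (j * k)"
    using g(1) derived_subset by (auto simp: nat_pow_pow)
  then show ?thesis
    using g(2) by blast
qed

lemma derived_commute:
  assumes "u \<in> G'" "v \<in> G'"
  shows "u \<otimes> v = v \<otimes> u"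
proof (rule derived_generator)
  fix g assume g: "g \<in> G'" "G' = {g [^] k | k. k \<in> (UNIV :: nat set)}"
  then obtain i j where "u = g [^] (i::nat)" "v = g [^] (j::nat)"
    using assms by blast
  then show ?thesis
    using g(1) derived_subset by (auto simp: nat_pow_mult add.commute)
qed

lemma m_pos: "0 < m"
proof (rule ccontr)
  assume "\<not> 0 < m"
  then have "card G' = 1"
    using card_derived by simp
  then have "G' = {\<one>}"
    using subgroup.one_closed[OF subgroup_derived] by (metis card_1_singletonE singletonD)
  obtain x y where "x \<in> carrier G" "y \<in> carrier G" "x \<otimes> y \<noteq> y \<otimes> x"
    using nonabelian by blast
  moreover have "commutator G x y \<in> G'"
    using commutator_in_derived calculation by blast
  ultimately show False
    using \<open>G' = {\<one>}\<close> commutator_eq_one_iff by blast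
qed

lemma exists_acts_by_power: "g \<in> carrier G \<Longrightarrow> \<exists>t. acts_by_power G G' g t"
proof -
  assume g: "g \<in> carrier G"
  obtain z where z: "z \<in> G'" "G' = {z [^] k | k. k \<in> (UNIV :: nat set)}"
    by (rule derived_generator)
  have "conj G z g \<in> G'"
    using normal.inv_op_closed1[OF derived_self_is_normal g z(1)] by (simp add: conj_def)
  then obtain t where t: "conj G z g = z [^] (t::nat)"
    using z(2) by blast
  have "conj G (z [^] k) g = (z [^] k) [^] t" for k :: nat
    using conj_pow_eq_pow[OF _ g t] z(1) derived_subset by blast
  then show ?thesis
    using z(2) unfolding acts_by_power_def by (intro exI[of _ t]) auto
qed

lemma acts_by_power_cong_one:
  assumes g: "g \<in> carrier G" and t: "acts_by_power G G' g t"
  shows "[t = 1] (mod p)"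
proof -
  obtain k where k: "order G = p ^ k"
    using order_eq by blast
  obtain z where z: "z \<in> G'" "ord z = p ^ m"
    by (rule derived_generator)
  have zc: "z \<in> carrier G"
    using z(1) derived_subset by blast
  have "acts_by_power G G' \<one> (t ^ p ^ k)"
    using acts_by_power_pow[OF derived_subset g t, of "order G"] pow_order_eq_1[OF g] k by simp
  then have "z [^] (t ^ p ^ k) = z [^] (1::nat)"
    using z(1) zc unfolding acts_by_power_def by auto
  then have "[t ^ p ^ k = 1] (mod p ^ m)"
    using nat_pow_eq_iff_cong[OF zc] z(2) by metis
  then have "[t ^ p ^ k = 1] (mod p)"
    using m_pos by (auto intro: cong_dvd_modulus_nat)
  then show ?thesis
    using pow_prime_power_cong[OF prime, of t k] cong_sym cong_trans by blast
qed

lemma exists_acts_by_power_cong_one: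
  "g \<in> carrier G \<Longrightarrow> \<exists>t. [t = 1] (mod p) \<and> acts_by_power G G' g t"
  using exists_acts_by_power acts_by_power_cong_one by blast

lemma not_cong_two_one: "\<not> [2 = 1] (mod p)"
proof -
  have "2 < p"
    using prime_gt_1_nat[OF prime] odd by (cases "p = 2") auto
  then show ?thesis
    by (simp add: cong_def)
qed

lemma acts_by_power_derived:
  assumes u: "u \<in> G'"
  shows "acts_by_power G G' u 1"
  unfolding acts_by_power_def
proof
  fix v assume v: "v \<in> G'"
  have carrier: "u \<in> carrier G" "v \<in> carrier G"
    using u v derived_subset by auto
  have "conj G v u = inv u \<otimes> (v \<otimes> u)"
    using carrier by (simp add: conj_def m_assoc)
  also have "\<dots> = v"
    using derived_commute[OF v u] carrier by simp
  finally show "conj G v u = v [^] (1::nat)"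
    using carrier by simp
qed

lemma pow_prime_mult:
  assumes x: "x \<in> carrier G" and y: "y \<in> carrier G"
  shows "\<exists>E. (x \<otimes> y) [^] p = x [^] p \<otimes> y [^] p \<otimes> commutator G y x [^] (p * E)"
proof -
  obtain R S where "[R = 1] (mod p)" "acts_by_power G G' x R" "[S = 1] (mod p)" "acts_by_power G G' y S"
    using exists_acts_by_power_cong_one x y by meson
  moreover have "commutator G y x \<in> G'"
    using commutator_in_derived x y by blast
  ultimately show ?thesis
    using pow_prime_mult_eq_commutator_pow[OF prime odd x y] unfolding acts_by_power_def by blast
qed

lemma commutator_pow_prime_power_left:
  assumes x: "x \<in> carrier G" and y: "y \<in> carrier G"
  shows "\<exists>w. \<not> p dvd w \<and> commutator G (y [^] (p ^ K)) x = commutator G y x [^] (p ^ K * w)"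
proof -
  obtain S where S: "[S = 1] (mod p)" "acts_by_power G G' y S"
    using exists_acts_by_power_cong_one y by blast
  obtain w where w: "geom_sum (p ^ K) S = p ^ K * w" "\<not> p dvd w"
    using geom_sum_prime_power[OF prime odd S(1)] by blast
  have "commutator G (y [^] (p ^ K)) x = commutator G y x [^] geom_sum (p ^ K) S"
    using S(2) commutator_in_derived[OF y x] unfolding acts_by_power_def
    by (intro commutator_pow_left[OF x y]) blast
  then show ?thesis
    using w by auto
qed

lemma commutator_pow_eq_one:
  assumes x: "x \<in> carrier G" and y: "y \<in> carrier G" and y_pow: "y [^] (p ^ K) = \<one>"
  shows "commutator G y x [^] (p ^ K) = \<one>"
proof -
  define d where "d = commutator G y x"
  have d: "d \<in> carrier G"
    using x y by (simp add: d_def)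
  obtain w where w: "\<not> p dvd w" "commutator G (y [^] (p ^ K)) x = d [^] (p ^ K * w)"
    using commutator_pow_prime_power_left[OF x y] d_def by blast
  then have "d [^] (p ^ K * w) = \<one>"
    using x y_pow by simp
  then have "ord d dvd p ^ K * w"
    using pow_eq_id[OF d] by simp
  moreover obtain k where "order G = p ^ k"
    using order_eq by blast
  then obtain e where "ord d = p ^ e"
    using ord_dvd_group_order[OF d] divides_primepow_nat[OF prime] by auto
  ultimately have "ord d dvd p ^ K"
    using w(1) prime by (metis coprime_dvd_mult_left_iff coprime_power_left_iff prime_imp_coprime)
  then show ?thesis
    using pow_eq_id[OF d] d_def by simp
qed

lemma pow_prime_mult_derived:
  assumes z: "z \<in> carrier G" and c: "c \<in> G'"
  shows "\<exists>v. (z \<otimes> c) [^] p = z [^] p \<otimes> c [^] (p * v)"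
proof -
  obtain t where t: "[t = 1] (mod p)" "acts_by_power G G' z t"
    using exists_acts_by_power_cong_one z by blast
  have "p dvd geom_sum p t"
    using geom_sum_cong[OF t(1), of p] by (simp add: cong_def dvd_eq_mod_eq_0)
  then obtain v where "geom_sum p t = p * v"
    by blast
  moreover have "(z \<otimes> c) [^] p = z [^] p \<otimes> c [^] geom_sum p t"
    using t(2) c derived_subset z unfolding acts_by_power_def by (intro pow_mult_eq_pow_geom_sum) auto
  ultimately show ?thesis
    by auto
qed

lemma pow_prime_power_mult:
  assumes x: "x \<in> carrier G" and y: "y \<in> carrier G"
  shows "\<exists>u\<in>G'. (x \<otimes> y) [^] (p ^ K) = x [^] (p ^ K) \<otimes> y [^] (p ^ K) \<otimes> u [^] (p ^ K)"
proof (induction K)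
  case 0
  show ?case
    using subgroup.one_closed[OF subgroup_derived] x y by force
next
  case (Suc K)
  define N where "N = p ^ K"
  define xN yN where "xN = x [^] N" and "yN = y [^] N"
  have xyN: "xN \<in> carrier G" "yN \<in> carrier G"
    using x y by (simp_all add: xN_def yN_def)
  obtain u where u: "u \<in> G'" "(x \<otimes> y) [^] N = xN \<otimes> yN \<otimes> u [^] N"
    using Suc N_def xN_def yN_def by blast
  have uN: "u [^] N \<in> G'" "u \<in> carrier G"
    using u(1) derived_pow_closed derived_subset by auto
  obtain v where v: "(xN \<otimes> yN \<otimes> u [^] N) [^] p = (xN \<otimes> yN) [^] p \<otimes> (u [^] N) [^] (p * v)"
    using pow_prime_mult_derived[OF _ uN(1)] xyN by blast
  obtain E where E: "(xN \<otimes> yN) [^] p = xN [^] p \<otimes> yN [^] p \<otimes> commutator G yN xN [^] (p * E)"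
    using pow_prime_mult[OF xyN] by blast
  obtain w where w: "commutator G yN xN = commutator G y xN [^] (N * w)"
    using commutator_pow_prime_power_left[OF xyN(1) y] yN_def N_def by blast
  define c where "c = commutator G y xN"
  have c: "c \<in> G'" "c \<in> carrier G"
    using commutator_in_derived xyN y by (auto simp: c_def)
  have "(x \<otimes> y) [^] (p ^ Suc K) = ((x \<otimes> y) [^] N) [^] p"
    using x y by (simp add: N_def nat_pow_pow mult.commute)
  also have "\<dots> = (xN \<otimes> yN \<otimes> u [^] N) [^] p"
    using u(2) by simp
  also have "\<dots> = xN [^] p \<otimes> yN [^] p \<otimes> ((c [^] (w * E)) [^] (p ^ Suc K) \<otimes> (u [^] v) [^] (p ^ Suc K))"
    using v E w c uN xyN by (simp add: c_def N_def m_assoc nat_pow_pow algebra_simps)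
  also have "(c [^] (w * E)) [^] (p ^ Suc K) \<otimes> (u [^] v) [^] (p ^ Suc K) =
      (c [^] (w * E) \<otimes> u [^] v) [^] (p ^ Suc K)"
    using pow_mult_distrib[OF derived_commute[OF derived_pow_closed derived_pow_closed]] c u(1) uN
    by simp
  finally have "(x \<otimes> y) [^] (p ^ Suc K) = xN [^] p \<otimes> yN [^] p \<otimes> (c [^] (w * E) \<otimes> u [^] v) [^] (p ^ Suc K)" .
  moreover have "xN [^] p = x [^] (p ^ Suc K)" "yN [^] p = y [^] (p ^ Suc K)"
    using x y by (simp_all add: xN_def yN_def N_def nat_pow_pow mult.commute)
  moreover have "c [^] (w * E) \<otimes> u [^] v \<in> G'"
    using subgroup.m_closed[OF subgroup_derived] derived_pow_closed c u(1) by blast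
  ultimately show ?case
    by metis
qed

abbreviation derived_pth_powers :: "'a set" where
  "derived_pth_powers \<equiv> {u [^] p | u. u \<in> G'}"

lemma normal_derived_pth_powers: "derived_pth_powers \<lhd> G"
proof -
  have "subgroup derived_pth_powers G"
  proof (rule finite_subgroupI[OF finite_carrier])
    show "derived_pth_powers \<subseteq> carrier G"
      using derived_subset by auto
    show "\<one> \<in> derived_pth_powers"
      using subgroup.one_closed[OF subgroup_derived] by force
  next
    fix x y assume "x \<in> derived_pth_powers" "y \<in> derived_pth_powers"
    then obtain u v where uv: "u \<in> G'" "v \<in> G'" "x = u [^] p" "y = v [^] p"
      by blast
    then have "x \<otimes> y = (u \<otimes> v) [^] p"
      using pow_mult_distrib[OF derived_commute[OF uv(1,2)]] uv subsetD[OF derived_subset] by simp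
    moreover have "u \<otimes> v \<in> G'"
      using subgroup.m_closed[OF subgroup_derived uv(1,2)] .
    ultimately show "x \<otimes> y \<in> derived_pth_powers"
      by blast
  qed
  moreover have "x \<otimes> h \<otimes> inv x \<in> derived_pth_powers"
    if x: "x \<in> carrier G" and h: "h \<in> derived_pth_powers" for x h
  proof -
    obtain u where u: "u \<in> G'" "h = u [^] p"
      using h by blast
    have "x \<otimes> u \<otimes> inv x \<in> G'"
      using normal.inv_op_closed2[OF derived_self_is_normal x u(1)] .
    moreover have "x \<otimes> h \<otimes> inv x = (x \<otimes> u \<otimes> inv x) [^] p"
      using conj_pow[of u "inv x" p] u x subsetD[OF derived_subset] by (simp add: conj_def)
    ultimately show ?thesis
      by blast
  qed
  ultimately show ?thesis
    by (simp add: normal_inv_iff)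
qed

lemma commutator_derived_in_pth_powers:
  assumes u: "u \<in> G'" and g: "g \<in> carrier G"
  shows "commutator G u g \<in> derived_pth_powers"
proof -
  obtain t where t: "[t = 1] (mod p)" "acts_by_power G G' g t"
    using exists_acts_by_power_cong_one[OF g] by blast
  have "t mod p = 1"
    using t(1) prime_gt_1_nat[OF prime] by (simp add: cong_def)
  then obtain s where "t = 1 + p * s"
    using mult_div_mod_eq[of p t] by (metis add.commute)
  then have "commutator G u g = (u [^] s) [^] p"
    using commutator_eq_pow_if_acts_by_power[OF u derived_subset g] t(2) u derived_subset
    by (auto simp: nat_pow_pow mult.commute)
  then show ?thesis
    using derived_pow_closed[OF u] by blast
qed

lemma derived_not_subset_pth_powers: "\<not> G' \<subseteq> derived_pth_powers"
proof
  assume sub: "G' \<subseteq> derived_pth_powers"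
  obtain z where z: "z \<in> G'" "G' = {z [^] k | k. k \<in> (UNIV :: nat set)}" "ord z = p ^ m"
    by (rule derived_generator)
  have zc: "z \<in> carrier G"
    using z(1) derived_subset by blast
  obtain u where u: "u \<in> G'" "z = u [^] p"
    using sub z(1) by blast
  obtain j where j: "u = z [^] (j::nat)"
    using u(1) z(2) by blast
  have "z [^] (j * p) = (z [^] j) [^] p"
    using zc by (simp add: nat_pow_pow)
  then have "z [^] (1::nat) = z [^] (j * p)"
    using u(2) zc unfolding j by (metis nat_pow_eone)
  then have "[1 = j * p] (mod p ^ m)"
    using nat_pow_eq_iff_cong[OF zc] z(3) by metis
  then have "[1 = j * p] (mod p)"
    using m_pos by (auto intro: cong_dvd_modulus_nat)
  then show False
    using prime_gt_1_nat[OF prime] by (simp add: cong_def)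
qed

lemma ord_eq_if_not_pth_power:
  assumes x: "x \<in> G'" and not_power: "x \<notin> derived_pth_powers"
  shows "ord x = p ^ m"
proof -
  obtain z where z: "z \<in> G'" "G' = {z [^] k | k. k \<in> (UNIV :: nat set)}" "ord z = p ^ m"
    by (rule derived_generator)
  have zc: "z \<in> carrier G"
    using z(1) derived_subset by blast
  obtain k where k: "x = z [^] (k::nat)"
    using x z(2) by blast
  have "\<not> p dvd k"
  proof
    assume "p dvd k"
    then obtain j where "k = j * p"
      by (metis dvd_def mult.commute)
    then have "x = (z [^] j) [^] p"
      using k zc by (simp add: nat_pow_pow)
    then show False
      using not_power derived_pow_closed[OF z(1)] by blast
  qed
  then have "k \<noteq> 0" "coprime (p ^ m) k"
    using prime_imp_coprime[OF prime] by (auto intro: gr0I)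
  then show ?thesis
    using ord_pow_gen[OF zc, of k] k z(3) by simp
qed

lemma generate_eq_derived_if_ord:
  assumes x: "x \<in> G'" and ord_x: "ord x = p ^ m"
  shows "generate G {x} = G'"
proof -
  have "generate G {x} \<subseteq> G'"
    using generate_subgroup_incl[OF _ subgroup_derived] x by blast
  moreover have "card (generate G {x}) = card G'"
    using generate_pow_card x ord_x card_derived derived_subset by auto
  ultimately show ?thesis
    using card_subset_eq finite_carrier derived_subset finite_subset by metis
qed

lemma ord_eq_oprime:
  assumes b: "b \<in> carrier G" and ord_coset: "group.ord (G Mod G') (G' #> b) = p ^ n"
  shows "ord b = p ^ (n + oprime G p n b)"
proof -
  obtain k where "order G = p ^ k"
    using order_eq by blast
  then obtain e where e: "ord b = p ^ e"
    using ord_dvd_group_order[OF b] divides_primepow_nat[OF prime] by auto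
  interpret N: normal G' G
    by (rule derived_self_is_normal)
  have hom: "group_hom G (G Mod G') (\<lambda>x. G' #> x)"
    using N.factorgroup_is_group N.r_coset_hom_Mod by (simp add: group_hom_def group_hom_axioms_def is_group)
  have "(G' #> b) [^]\<^bsub>G Mod G'\<^esub> ord b = G' #> (b [^] ord b)"
    using group_hom.hom_nat_pow[OF hom b] by simp
  also have "\<dots> = \<one>\<^bsub>G Mod G'\<^esub>"
    using group_hom.hom_one[OF hom] b by simp
  finally have "(G' #> b) [^]\<^bsub>G Mod G'\<^esub> ord b = \<one>\<^bsub>G Mod G'\<^esub>" .
  then have "p ^ n dvd p ^ e"
    using group.pow_eq_id[OF N.factorgroup_is_group] b ord_coset e by (simp add: carrier_FactGroup)
  then have "n \<le> e"
    using prime_gt_1_nat[OF prime] by (simp add: dvd_power_iff)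
  have "oprime G p n b = e - n"
    unfolding oprime_def
  proof (rule the_equality)
    show "ord b = p ^ (n + (e - n))"
      using e \<open>n \<le> e\<close> by simp
  next
    fix j assume "ord b = p ^ (n + j)"
    then show "j = e - n"
      using e prime_gt_1_nat[OF prime] by (simp add: power_inject_exp)
  qed
  then show ?thesis
    using e \<open>n \<le> e\<close> by simp
qed

end

section \<open>A basis acting by the prescribed powers\<close>

locale cyclic_derived_pgroup_basis = cyclic_derived_pgroup +
  fixes n1 n2 :: nat and b1 b2 :: 'a
  assumes basis_r: "is_basis_r G p m n1 n2 b1 b2"
begin

abbreviation a :: 'a where "a \<equiv> commutator G b2 b1"

abbreviation M :: nat where "M \<equiv> max (o1 G p n1 n2) (o2 G p n1 n2)"

lemma basis_carrier: "b1 \<in> carrier G" "b2 \<in> carrier G"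
  using basis_r unfolding is_basis_r_def is_basis_def Let_def by auto

lemma acts_by_power_basis:
  "acts_by_power G G' b1 (r1 G p m n1 n2)" "acts_by_power G G' b2 (r2 G p m n1 n2)"
  using basis_r unfolding is_basis_r_def acts_by_power_def by auto

lemma quotient_generated: "generate (G Mod G') ((\<lambda>b. G' #> b) ` {b1, b2}) = carrier (G Mod G')"
  using basis_r unfolding is_basis_r_def is_basis_def Let_def by simp

lemma subgroup_eq_carrier:
  "\<lbrakk>subgroup T G; b1 \<in> T; b2 \<in> T; G' \<subseteq> T\<rbrakk> \<Longrightarrow> T = carrier G"
  by (rule normal.subgroup_eq_carrier_if_quotient_generated[OF derived_self_is_normal quotient_generated]) auto

lemma o1_less: "o1 G p n1 n2 < m"
proof (rule ccontr)
  \<comment> \<open>otherwise m - o1 truncates to 0 and b1 would act on G' by squaring\<close>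
  assume "\<not> o1 G p n1 n2 < m"
  then have "r1 G p m n1 n2 = 2"
    by (simp add: r1_def)
  then show False
    using acts_by_power_cong_one[OF basis_carrier(1) acts_by_power_basis(1)] not_cong_two_one by simp
qed

lemma o2_less: "o2 G p n1 n2 < m"
proof (rule ccontr)
  assume not_less: "\<not> o2 G p n1 n2 < m"
  then have "o1 G p n1 n2 < o2 G p n1 n2"
    using o1_less by simp
  then have "r2 G p m n1 n2 = 2"
    using not_less by (simp add: r2_def)
  then show False
    using acts_by_power_cong_one[OF basis_carrier(2) acts_by_power_basis(2)] not_cong_two_one by simp
qed

lemma M_less: "M < m"
  using o1_less o2_less by simp

lemma r_cong:
  "[r1 G p m n1 n2 = 1] (mod p ^ (m - M))" "[r2 G p m n1 n2 = 1] (mod p ^ (m - M))"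
proof -
  have one_plus: "[1 + p ^ (m - j) = 1] (mod p ^ (m - M))" if "j \<le> M" for j
  proof -
    have "p ^ (m - M) dvd p ^ (m - j)"
      using that by (simp add: le_imp_power_dvd)
    then have "[p ^ (m - j) = 0] (mod p ^ (m - M))"
      by (simp add: cong_0_iff)
    then show ?thesis
      using cong_add[OF cong_refl[of 1]] by fastforce
  qed
  then show r1: "[r1 G p m n1 n2 = 1] (mod p ^ (m - M))"
    by (simp add: r1_def)
  show "[r2 G p m n1 n2 = 1] (mod p ^ (m - M))"
  proof (cases "o1 G p n1 n2 < o2 G p n1 n2")
    case True
    then show ?thesis
      using one_plus by (simp add: r2_def)
  next
    case False
    then show ?thesis
      using cong_pow[OF r1] by (simp add: r2_def)
  qed
qed

lemma exists_acts_by_power_cong: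
  assumes g: "g \<in> carrier G"
  shows "\<exists>t. [t = 1] (mod p ^ (m - M)) \<and> acts_by_power G G' g t"
proof -
  let ?T = "{g \<in> carrier G. \<exists>t. [t = 1] (mod p ^ (m - M)) \<and> acts_by_power G G' g t}"
  have "subgroup ?T G"
  proof (rule finite_subgroupI[OF finite_carrier])
    fix x y assume "x \<in> ?T" "y \<in> ?T"
    then obtain t s where "x \<in> carrier G" "y \<in> carrier G"
      "[t = 1] (mod p ^ (m - M))" "acts_by_power G G' x t"
      "[s = 1] (mod p ^ (m - M))" "acts_by_power G G' y s"
      by blast
    then show "x \<otimes> y \<in> ?T"
      using acts_by_power_mult[OF derived_subset] cong_mult[of t 1 _ s 1] by fastforce
  qed (use acts_by_power_one[OF derived_subset] in \<open>auto intro!: exI[of _ 1]\<close>)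
  moreover have "b1 \<in> ?T"
    using basis_carrier(1) acts_by_power_basis(1) r_cong(1) by auto
  moreover have "b2 \<in> ?T"
    using basis_carrier(2) acts_by_power_basis(2) r_cong(2) by auto
  moreover have "G' \<subseteq> ?T"
    using acts_by_power_derived subsetD[OF derived_subset] by (auto intro!: exI[of _ 1])
  ultimately have "?T = carrier G"
    by (rule subgroup_eq_carrier)
  then show ?thesis
    using g by blast
qed

lemma exists_acts_by_power_one_plus:
  assumes g: "g \<in> carrier G"
  shows "\<exists>c. acts_by_power G G' g (1 + p ^ (m - M) * c)"
proof -
  obtain t where t: "[t = 1] (mod p ^ (m - M))" "acts_by_power G G' g t"
    using exists_acts_by_power_cong[OF g] by blast
  have "1 < p ^ (m - M)"
    using one_less_power[OF prime_gt_1_nat[OF prime]] M_less by simp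
  then have "t mod p ^ (m - M) = 1"
    using t(1) M_less prime_gt_1_nat[OF prime] unfolding cong_def by simp
  then have "t = 1 + p ^ (m - M) * (t div p ^ (m - M))"
    using mult_div_mod_eq[of "p ^ (m - M)" t] by linarith
  then show ?thesis
    using t(2) by metis
qed

lemma exists_acts_by_power_exact: "\<exists>b\<in>carrier G. acts_by_power G G' b (1 + p ^ (m - M))"
proof (cases "o1 G p n1 n2 < o2 G p n1 n2")
  case True
  then show ?thesis
    using basis_carrier(2) acts_by_power_basis(2) by (auto simp: r2_def)
next
  case False
  then show ?thesis
    using basis_carrier(1) acts_by_power_basis(1) by (auto simp: r1_def)
qed

lemma commutator_not_pth_power: "a \<notin> derived_pth_powers"
proof
  assume a_power: "a \<in> derived_pth_powers"
  have "commutator G b b' \<in> derived_pth_powers" if "b \<in> {b1, b2}" "b' \<in> {b1, b2}" for b b'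
  proof -
    interpret P: normal derived_pth_powers G
      by (rule normal_derived_pth_powers)
    have "commutator G b1 b2 = inv a"
      using inv_commutator basis_carrier by simp
    moreover have "inv a \<in> derived_pth_powers"
      by (rule P.m_inv_closed[OF a_power])
    moreover have "\<one> \<in> derived_pth_powers"
      by (rule P.one_closed)
    moreover have "(b = b1 \<or> b = b2) \<and> (b' = b1 \<or> b' = b2)"
      using that by blast
    ultimately show ?thesis
      using a_power basis_carrier by (elim conjE disjE) (simp_all only: commutator_self)
  qed
  then have "G' \<subseteq> derived_pth_powers"
    using normal.derived_subset_if_quotient_generated[OF derived_self_is_normal finite_carrier
        quotient_generated _ normal_derived_pth_powers commutator_derived_in_pth_powers]
      basis_carrier by blast
  then show False
    using derived_not_subset_pth_powers by blast
qed

lemma ord_commutator: "ord a = p ^ m"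
  using ord_eq_if_not_pth_power commutator_not_pth_power commutator_in_derived basis_carrier by blast

lemma generate_commutator: "generate G {a} = G'"
  using generate_eq_derived_if_ord ord_commutator commutator_in_derived basis_carrier by blast

lemma derived_central_iff:
  assumes z: "z \<in> G'"
  shows "z \<in> center G \<longleftrightarrow> z [^] (p ^ (m - M)) = \<one>"
proof
  assume "z \<in> center G"
  moreover obtain b where b: "b \<in> carrier G" "acts_by_power G G' b (1 + p ^ (m - M))"
    using exists_acts_by_power_exact by blast
  ultimately have "commutator G z b = \<one>"
    using commutator_eq_one_iff b(1) by (simp add: center_def)
  then show "z [^] (p ^ (m - M)) = \<one>"
    using commutator_eq_pow_if_acts_by_power[OF z derived_subset b(1,2)] by simp
next
  assume z_pow: "z [^] (p ^ (m - M)) = \<one>"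
  have zc: "z \<in> carrier G"
    using z derived_subset by blast
  have "z \<otimes> g = g \<otimes> z" if g: "g \<in> carrier G" for g
  proof -
    obtain c where "acts_by_power G G' g (1 + p ^ (m - M) * c)"
      using exists_acts_by_power_one_plus[OF g] by blast
    then have "commutator G z g = (z [^] (p ^ (m - M))) [^] c"
      using commutator_eq_pow_if_acts_by_power[OF z derived_subset g] zc by (simp add: nat_pow_pow)
    then show ?thesis
      using commutator_eq_one_iff[OF zc g] z_pow by simp
  qed
  then show "z \<in> center G"
    using zc by (simp add: center_def)
qed

lemma center_inter_derived: "center G \<inter> G' = generate G {a [^] (p ^ M)}"
proof -
  have "center G \<inter> G' = {z \<in> generate G {a}. z [^] (p ^ (m - M)) = \<one>}"
    using derived_central_iff generate_commutator by auto
  also have "\<dots> = generate G {a [^] (p ^ M)}"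
    using generate_pow_prime_power[OF finite_carrier prime_gt_1_nat[OF prime] _ ord_commutator] basis_carrier M_less
    by simp
  finally show ?thesis .
qed

lemma comm_subgroup_generate:
  assumes u: "u \<in> G'"
  shows "comm_subgroup G (generate G {u}) (carrier G) = generate G {u [^] (p ^ (m - M))}"
proof -
  have uc: "u \<in> carrier G"
    using u derived_subset by blast
  let ?C = "{commutator G h k | h k. h \<in> generate G {u} \<and> k \<in> carrier G}"
  have C_carrier: "?C \<subseteq> carrier G"
    using generate_incl[of "{u}"] uc by blast
  have sub: "?C \<subseteq> generate G {u [^] (p ^ (m - M))}"
  proof
    fix x assume "x \<in> ?C"
    then obtain h k where x: "x = commutator G h k" "h \<in> generate G {u}" "k \<in> carrier G"
      by blast
    then obtain j where j: "h = u [^] (j::nat)"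
      using generate_pow_on_finite_carrier[OF finite_carrier uc] by blast
    obtain c where "acts_by_power G G' k (1 + p ^ (m - M) * c)"
      using exists_acts_by_power_one_plus[OF x(3)] by blast
    then have "x = (u [^] (p ^ (m - M))) [^] (j * c)"
      using commutator_eq_pow_if_acts_by_power[OF derived_pow_closed[OF u] derived_subset x(3)] x(1) j uc
      by (simp add: nat_pow_pow ac_simps)
    then show "x \<in> generate G {u [^] (p ^ (m - M))}"
      using generate_pow_on_finite_carrier[OF finite_carrier] uc by auto
  qed
  have mem: "u [^] (p ^ (m - M)) \<in> ?C"
  proof -
    obtain b where b: "b \<in> carrier G" "acts_by_power G G' b (1 + p ^ (m - M))"
      using exists_acts_by_power_exact by blast
    have "u [^] (p ^ (m - M)) = commutator G u b"
      using commutator_eq_pow_if_acts_by_power[OF u derived_subset b] by simp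
    then show ?thesis
      using b(1) generate.incl[of u "{u}" G] by blast
  qed
  show ?thesis
    unfolding comm_subgroup_def
  proof (rule equalityI)
    show "generate G ?C \<subseteq> generate G {u [^] (p ^ (m - M))}"
      using sub uc by (intro generate_subgroup_incl generate_is_subgroup) auto
    show "generate G {u [^] (p ^ (m - M))} \<subseteq> generate G ?C"
      using mem generate.incl[OF mem] by (intro generate_subgroup_incl generate_is_subgroup[OF C_carrier]) auto
  qed
qed

lemma gamma_eq:
  assumes "2 \<le> i"
  shows "gamma G i = generate G {a [^] (p ^ ((i - 2) * (m - M)))}"
  using assms
proof (induction i rule: dec_induct)
  case base
  have "gamma G 2 = G'"
    using comm_subgroup_carrier by (simp add: gamma_def numeral_2_eq_2)
  then show ?case
    using generate_commutator basis_carrier by simp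
next
  case (step i)
  have "gamma G (Suc i) = comm_subgroup G (gamma G i) (carrier G)"
    using step(1) by (cases i) (simp_all add: gamma_def)
  also have "\<dots> = generate G {(a [^] (p ^ ((i - 2) * (m - M)))) [^] (p ^ (m - M))}"
    using step(3) comm_subgroup_generate derived_pow_closed commutator_in_derived basis_carrier by simp
  also have "(a [^] (p ^ ((i - 2) * (m - M)))) [^] (p ^ (m - M)) = a [^] (p ^ ((Suc i - 2) * (m - M)))"
  proof -
    have "i - 1 = Suc (i - 2)"
      using step(1) by simp
    then have "(i - 2) * (m - M) + (m - M) = (i - 1) * (m - M)"
      by simp
    then show ?thesis
      using basis_carrier by (simp add: nat_pow_pow flip: power_add)
  qed
  finally show ?case .
qed

lemma gamma_Suc_eq_trivial_iff: "gamma G (Suc c) = {\<one>} \<longleftrightarrow> 1 \<le> c \<and> m \<le> (c - 1) * (m - M)"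
proof (cases "c = 0")
  case True
  then show ?thesis
    using nonabelian by (auto simp: gamma_def)
next
  case False
  have "gamma G (Suc c) = generate G {a [^] (p ^ ((c - 1) * (m - M)))}"
    using gamma_eq[of "Suc c"] False by simp
  then have "gamma G (Suc c) = {\<one>} \<longleftrightarrow> a [^] (p ^ ((c - 1) * (m - M))) = \<one>"
    using generate.incl[of _ "{a [^] (p ^ ((c - 1) * (m - M)))}" G] generate_one by auto
  also have "\<dots> \<longleftrightarrow> m \<le> (c - 1) * (m - M)"
    using pow_eq_id ord_commutator basis_carrier prime_gt_1_nat[OF prime] by (simp add: dvd_power_iff)
  finally show ?thesis
    using False by simp
qed

lemma nilpotency_class_eq: "nilpotency_class G = 1 + nat \<lceil>real m / real (m - M)\<rceil>"
  unfolding nilpotency_class_def gamma_Suc_eq_trivial_iff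
  using Least_ge_eq_ceiling M_less by simp

lemma group_exponent_eq:
  assumes ord_b1: "ord b1 = p ^ e1" and ord_b2: "ord b2 = p ^ e2"
  shows "group_exponent G = p ^ max e1 e2"
proof -
  define N where "N = p ^ max e1 e2"
  have basis_pow: "b1 [^] N = \<one>" "b2 [^] N = \<one>"
    using ord_b1 ord_b2 basis_carrier pow_eq_id by (simp_all add: N_def le_imp_power_dvd)
  have "a [^] N = \<one>"
    using commutator_pow_eq_one[OF basis_carrier(1,2)] basis_pow(2) by (simp add: N_def)
  have derived_pow: "u [^] N = \<one>" if "u \<in> G'" for u
  proof -
    have "u \<in> generate G {a}"
      using that generate_commutator by simp
    then obtain k where "u = a [^] (k::nat)"
      using generate_pow_on_finite_carrier[OF finite_carrier commutator_closed[OF basis_carrier(2,1)]]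
      by blast
    then have "u [^] N = (a [^] N) [^] k"
      using basis_carrier by (simp add: nat_pow_pow mult.commute)
    then show ?thesis
      using \<open>a [^] N = \<one>\<close> by simp
  qed
  have "subgroup {g \<in> carrier G. g [^] N = \<one>} G"
  proof (rule finite_subgroupI[OF finite_carrier])
    fix x y assume "x \<in> {g \<in> carrier G. g [^] N = \<one>}" "y \<in> {g \<in> carrier G. g [^] N = \<one>}"
    then have xy: "x \<in> carrier G" "y \<in> carrier G" "x [^] N = \<one>" "y [^] N = \<one>"
      by auto
    obtain u where "u \<in> G'" "(x \<otimes> y) [^] N = x [^] N \<otimes> y [^] N \<otimes> u [^] N"
      unfolding N_def using pow_prime_power_mult[OF xy(1,2)] by blast
    then show "x \<otimes> y \<in> {g \<in> carrier G. g [^] N = \<one>}"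
      using xy derived_pow by simp
  qed auto
  then have "{g \<in> carrier G. g [^] N = \<one>} = carrier G"
    using subgroup_eq_carrier basis_carrier basis_pow derived_pow derived_subset by blast
  moreover have "\<exists>b\<in>carrier G. ord b = N"
    using ord_b1 ord_b2 basis_carrier by (cases "e1 \<le> e2") (auto simp: N_def max_def)
  moreover have "0 < N"
    using prime_gt_0_nat[OF prime] by (simp add: N_def)
  ultimately have "group_exponent G = N"
    using group_exponent_eqI by blast
  then show ?thesis
    by (simp add: N_def)
qed

end

theorem lemma3p5:
  fixes G :: "('a, 'b) monoid_scheme" and p m n1 n2 :: nat and b1 b2 :: 'a
  assumes grp: "group G"
    and fin: "finite (carrier G)"
    and p_prime: "Factorial_Ring.prime p" and p_odd: "odd p"
    and pgroup: "\<exists>k. order G = p ^ k"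
    and nonabelian: "\<exists>x \<in> carrier G. \<exists>y \<in> carrier G. x \<otimes>\<^bsub>G\<^esub> y \<noteq> y \<otimes>\<^bsub>G\<^esub> x"
    and two_gen: "\<exists>x \<in> carrier G. \<exists>y \<in> carrier G. generate G {x, y} = carrier G"
    and cyclic_derived: "\<exists>g \<in> derived_subgroup G. generate G {g} = derived_subgroup G"
    and m_def: "card (derived_subgroup G) = p ^ m"
    and quot_iso: "G Mod (derived_subgroup G) \<cong>
                     (integer_mod_group (p ^ n1) \<times>\<times> integer_mod_group (p ^ n2))"
    and n_ord: "n1 \<ge> n2" "n2 \<ge> 1"
    and b_Br: "is_basis_r G p m n1 n2 b1 b2"
    and b_max: "oprime G p n1 b1 = o1' G p m n1 n2" "oprime G p n2 b2 = o2' G p m n1 n2"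
  shows "(let a = commutator G b2 b1; M = max (o1 G p n1 n2) (o2 G p n1 n2) in
           center G \<inter> derived_subgroup G = generate G {a [^]\<^bsub>G\<^esub> (p ^ M)}
         \<and> group_exponent G = p ^ max (n1 + o1' G p m n1 n2) (n2 + o2' G p m n1 n2)
         \<and> (\<forall>i \<ge> 2. gamma G i = generate G {a [^]\<^bsub>G\<^esub> (p ^ ((i - 2) * (m - M)))})
         \<and> nilpotency_class G = 1 + nat \<lceil>real m / real (m - M)\<rceil>)"
proof -
  interpret cyclic_derived_pgroup_basis G p m n1 n2 b1 b2
    using grp fin p_prime p_odd pgroup nonabelian cyclic_derived m_def b_Br
    by (simp add: cyclic_derived_pgroup_basis_def cyclic_derived_pgroup_def
        cyclic_derived_pgroup_axioms_def cyclic_derived_pgroup_basis_axioms_def)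
  have "group.ord (G Mod G') (G' #>\<^bsub>G\<^esub> b1) = p ^ n1" "group.ord (G Mod G') (G' #>\<^bsub>G\<^esub> b2) = p ^ n2"
    using b_Br unfolding is_basis_r_def is_basis_def Let_def by auto
  then have "group.ord G b1 = p ^ (n1 + o1' G p m n1 n2)" "group.ord G b2 = p ^ (n2 + o2' G p m n1 n2)"
    using ord_eq_oprime basis_carrier b_max by auto
  then show ?thesis
    unfolding Let_def
    using center_inter_derived group_exponent_eq gamma_eq nilpotency_class_eq by blast
qed

end
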